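(* The $\mathrm{GL}_n$-geometric crystal structure on $\mathrm{GT}_n$ is given by $\bar\gamma(\mathbf{z})=\Big(z_{1,1},\frac{z_{1,2}z_{2,2}}{z_{1,1}},\dots,\frac{\prod_{i=1}^nz_{i,n}}{\prod_{i=1}^{n-1}z_{i,n-1}}\Big)$ (the $j$th entry being $\prod_{i=1}^jz_{i,j}/\prod_{i=1}^{j-1}z_{i,j-1}$), $\bar\varepsilon_j(\mathbf{z})=\frac{z_{1,j+1}}{z_{1,j}}\,\mathrm{gMax}_{1\le k\le j}\Big(\prod_{i=2}^k\phi_{i,j}^{-1}\Big)$, $\bar\varphi_j(\mathbf{z})=\frac{z_{j,j}}{z_{j+1,j+1}}\,\mathrm{gMax}_{1\le k\le j}\Big(\prod_{i=k+1}^j\phi_{i,j}\Big)$, and $\bar e_j^c(\mathbf{z})=\mathbf{z}'$ where $z'_{i,r}=z_{i,j}\frac{C_{i,j}}{C_{i+1,j}}$ if $r=j$ and $z'_{i,r}=z_{i,r}$ otherwise, with $C_{i,j}=\sum_{k=1}^jc^{\mathbb{1}_{k\ge i}}\prod_{\ell=2}^k\phi_{\ell,j}$.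
   Context: $\mathrm{GT}_n$ is the torus of arrays $\mathbf{z}=(z_{i,j})$, $z_{i,j}\in\mathbb{C}^*$, $1\le i\le j\le n$. $E_{a,b}$ is a matrix unit, $x_j(a)=I+aE_{j,j+1}$, $\Delta_I(A)$ is the minor of $A$ with rows $I$ and columns $[1,|I|]$ ($\Delta_\emptyset=1$). $W^i(y_i,\dots,y_n)=\sum_{k<i}E_{kk}+\sum_{k\ge i}y_kE_{kk}+\sum_{k=i}^{n-1}E_{k+1,k}$; $\Phi(\mathbf{z})=W^n(z_{n,n})W^{n-1}(z_{n-1,n-1},\frac{z_{n-1,n}}{z_{n-1,n-1}})\cdots W^1(z_{1,1},\frac{z_{1,2}}{z_{1,1}},\dots,\frac{z_{1,n}}{z_{1,n-1}})$; $\Psi(A)=(\Delta_{[i,j]}(A)/\Delta_{[i+1,j]}(A))_{1\le i\le j\le n}$. With $A=\Phi(\mathbf{z})$, the structure is $\bar\gamma(\mathbf{z})=(A_{1,1},\dots,A_{n,n})$, $\bar\varepsilon_j(\mathbf{z})=A_{j+1,j+1}/A_{j+1,j}$, $\bar\varphi_j(\mathbf{z})=A_{j,j}/A_{j+1,j}$, $\bar e_j^c(\mathbf{z})=\Psi\big(x_j((c-1)\bar\varphi_j(\mathbf{z}))\,A\,x_j((c^{-1}-1)\bar\varepsilon_j(\mathbf{z}))\big)$, for $j\in[n-1]$. The diamond ratio is $\phi_{i,j}=\frac{z_{i-1,j}z_{i,j}}{z_{i-1,j-1}z_{i,j+1}}$. $\mathrm{gMax}(f_1,\dots,f_k)=(f_1^{-1}+\dots+f_k^{-1})^{-1}$,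 and $\mathrm{gMax}(\emptyset)=1$; empty products equal $1$. *)

theory Defs
  imports Complex_Main "Jordan_Normal_Form.Determinant"
begin

text \<open>Arrays z are functions nat => nat => complex, indexed 1-based as z i j, 1 <= i <= j <= n.
  Matrices are n x n Jordan_Normal_Form matrices (0-based internally); Ent gives 1-based entries.\<close>

definition GT :: "nat \<Rightarrow> (nat \<Rightarrow> nat \<Rightarrow> complex) set" where
  "GT n = {z. \<forall>i j. 1 \<le> i \<and> i \<le> j \<and> j \<le> n \<longrightarrow> z i j \<noteq> 0}"

definition Ent :: "complex mat \<Rightarrow> nat \<Rightarrow> nat \<Rightarrow> complex" where
  "Ent A a b = A $$ (a - 1, b - 1)"

text \<open>W^i(y_i,...,y_n) with y given as a 1-based function.\<close>
definition Wmat :: "nat \<Rightarrow> nat \<Rightarrow> (nat \<Rightarrow> complex) \<Rightarrow> complex mat" where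
  "Wmat n i y = mat n n (\<lambda>(r, c).
     if r = c then (if Suc r < i then 1 else y (Suc r))
     else if r = Suc c \<and> i \<le> Suc c then 1 else 0)"

fun Phi_aux :: "nat \<Rightarrow> (nat \<Rightarrow> nat \<Rightarrow> complex) \<Rightarrow> nat \<Rightarrow> complex mat" where
  "Phi_aux n z 0 = 1\<^sub>m n"
| "Phi_aux n z (Suc m) =
     Wmat n (Suc m) (\<lambda>k. if k = Suc m then z (Suc m) (Suc m) else z (Suc m) k / z (Suc m) (k - 1))
     * Phi_aux n z m"

definition Phi :: "nat \<Rightarrow> (nat \<Rightarrow> nat \<Rightarrow> complex) \<Rightarrow> complex mat" where
  "Phi n z = Phi_aux n z n"

text \<open>Delta_{[i,j]}(A): rows i..j, columns 1..(j-i+1) (1-based); empty interval gives det of 0x0 = 1.\<close>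
definition minor :: "complex mat \<Rightarrow> nat \<Rightarrow> nat \<Rightarrow> complex" where
  "minor A i j = det (mat (Suc j - i) (Suc j - i) (\<lambda>(a, b). A $$ (i - 1 + a, b)))"

definition Psi :: "complex mat \<Rightarrow> nat \<Rightarrow> nat \<Rightarrow> complex" where
  "Psi A i j = minor A i j / minor A (Suc i) j"

definition xmat :: "nat \<Rightarrow> nat \<Rightarrow> complex \<Rightarrow> complex mat" where
  "xmat n j a = mat n n (\<lambda>(r, c). if r = c then 1 else if r = j - 1 \<and> c = j then a else 0)"

definition gammabar :: "nat \<Rightarrow> (nat \<Rightarrow> nat \<Rightarrow> complex) \<Rightarrow> nat \<Rightarrow> complex" where
  "gammabar n z k = Ent (Phi n z) k k"

definition epsbar :: "nat \<Rightarrow> (nat \<Rightarrow> nat \<Rightarrow> complex) \<Rightarrow> nat \<Rightarrow> complex" where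
  "epsbar n z j = Ent (Phi n z) (Suc j) (Suc j) / Ent (Phi n z) (Suc j) j"

definition phibar :: "nat \<Rightarrow> (nat \<Rightarrow> nat \<Rightarrow> complex) \<Rightarrow> nat \<Rightarrow> complex" where
  "phibar n z j = Ent (Phi n z) j j / Ent (Phi n z) (Suc j) j"

definition emat :: "nat \<Rightarrow> complex \<Rightarrow> nat \<Rightarrow> (nat \<Rightarrow> nat \<Rightarrow> complex) \<Rightarrow> complex mat" where
  "emat n c j z = xmat n j ((c - 1) * phibar n z j) * Phi n z * xmat n j ((inverse c - 1) * epsbar n z j)"

definition ebar :: "nat \<Rightarrow> complex \<Rightarrow> nat \<Rightarrow> (nat \<Rightarrow> nat \<Rightarrow> complex) \<Rightarrow> nat \<Rightarrow> nat \<Rightarrow> complex" where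
  "ebar n c j z = Psi (emat n c j z)"

definition diamond :: "(nat \<Rightarrow> nat \<Rightarrow> complex) \<Rightarrow> nat \<Rightarrow> nat \<Rightarrow> complex" where
  "diamond z i j = z (i - 1) j * z i j / (z (i - 1) (j - 1) * z i (Suc j))"

definition gMax :: "('a \<Rightarrow> complex) \<Rightarrow> 'a set \<Rightarrow> complex" where
  "gMax f K = (if K = {} then 1 else inverse (\<Sum>k\<in>K. inverse (f k)))"

definition Cc :: "complex \<Rightarrow> (nat \<Rightarrow> nat \<Rightarrow> complex) \<Rightarrow> nat \<Rightarrow> nat \<Rightarrow> complex" where
  "Cc c z i j = (\<Sum>k=1..j. (if i \<le> k then c else 1) * (\<Prod>l=2..k. diamond z l j))"

end

theory Submission
  imports Defs
begin

text \<open>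
  \<open>\<Phi>(z) = W\<^sup>n \<cdots> W\<^sup>1\<close> is lower triangular. If column \<open>p\<close> of \<open>B\<close> vanishes on the rows of a
  minor, right multiplication by \<open>W\<^sup>p\<^sup>+\<^sup>1\<close> only shifts the column window of that minor by one.
  Peeling off \<open>W\<^sup>1, \<dots>, W\<^sup>i\<^sup>-\<^sup>1\<close> therefore turns \<open>\<Delta>\<^bsub>[i,r]\<^esub>(\<Phi>(z))\<close> into a principal minor of the
  lower triangular \<open>W\<^sup>n \<cdots> W\<^sup>i\<close>, whose diagonal product telescopes to \<open>z\<^sub>i\<^sub>,\<^sub>r \<cdots> z\<^sub>r\<^sub>,\<^sub>r\<close>;
  in particular \<open>\<Psi>(\<Phi>(z)) = z\<close>. The maps \<open>\<gamma>\<close>, \<open>\<epsilon>\<close>, \<open>\<phi>\<close> are read off the diagonal and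
  subdiagonal of \<open>\<Phi>(z)\<close>, and each subdiagonal entry is a sum of products of diamond ratios.
  In \<open>e\<^sub>j\<^sup>c\<close>, the right factor \<open>x\<^sub>j\<close> is a column operation invisible to minors on initial columns,
  and the left factor \<open>x\<^sub>j\<close> adds a multiple of row \<open>j + 1\<close> to row \<open>j\<close>. This changes only the
  minors \<open>\<Delta>\<^bsub>[i,j]\<^esub>\<close>, which by linearity in their last row acquire a multiple of a
  lower triangular determinant; that multiple produces the sums \<open>C\<^sub>i\<^sub>,\<^sub>j\<close>.
\<close>

section \<open>The elementary matrices\<close>

lemma index_mult_mat_sum:
  assumes "A \<in> carrier_mat n n" "B \<in> carrier_mat n n" "i < n" "j < n"
  shows "(A * B) $$ (i, j) = (\<Sum>t<n. A $$ (i, t) * B $$ (t, j))"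
  using assms by (simp add: scalar_prod_def atLeast0LessThan)

lemma Wmat_carrier [simp]: "Wmat n m y \<in> carrier_mat n n"
  unfolding Wmat_def by simp

lemma index_Wmat_mult:
  assumes "P \<in> carrier_mat n n" "r < n" "c < n"
  shows "(Wmat n m y * P) $$ (r, c) = (if Suc r < m then 1 else y (Suc r)) * P $$ (r, c)
     + (if 0 < r \<and> m \<le> r then P $$ (r - 1, c) else 0)"
proof -
  have "(Wmat n m y * P) $$ (r, c) = (\<Sum>t<n. Wmat n m y $$ (r, t) * P $$ (t, c))"
    using assms by (intro index_mult_mat_sum) auto
  also have "\<dots> =
      (\<Sum>t<n. (if t = r then (if Suc r < m then 1 else y (Suc r)) * P $$ (r, c) else 0)
        + (if t = r - 1 then (if 0 < r \<and> m \<le> r then P $$ (r - 1, c) else 0) else 0))"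
    using assms by (intro sum.cong) (auto simp: Wmat_def)
  finally show ?thesis
    using assms by (simp add: sum.distrib less_imp_diff_less)
qed

lemma index_mult_Wmat:
  assumes "B \<in> carrier_mat n n" "r < n" "c < n"
  shows "(B * Wmat n m y) $$ (r, c) = B $$ (r, c) * (if Suc c < m then 1 else y (Suc c))
     + (if Suc c < n \<and> m \<le> Suc c then B $$ (r, Suc c) else 0)"
proof -
  have "(B * Wmat n m y) $$ (r, c) = (\<Sum>t<n. B $$ (r, t) * Wmat n m y $$ (t, c))"
    using assms by (intro index_mult_mat_sum) auto
  also have "\<dots> =
      (\<Sum>t<n. (if t = c then B $$ (r, c) * (if Suc c < m then 1 else y (Suc c)) else 0)
        + (if t = Suc c then (if m \<le> Suc c then B $$ (r, Suc c) else 0) else 0))"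
    using assms by (intro sum.cong) (auto simp: Wmat_def)
  finally show ?thesis
    using assms by (simp add: sum.distrib)
qed

lemma xmat_carrier [simp]: "xmat n j a \<in> carrier_mat n n"
  unfolding xmat_def by simp

lemma xmat_eq_addrow_mat: "0 < j \<Longrightarrow> xmat n j a = addrow_mat n a (j - 1) j"
  unfolding xmat_def addrow_mat_def by (rule eq_matI) auto

lemma xmat_mult: "A \<in> carrier_mat n n \<Longrightarrow> 0 < j \<Longrightarrow> j < n \<Longrightarrow> xmat n j a * A = addrow a (j - 1) j A"
  by (simp add: xmat_eq_addrow_mat addrow_mat)

lemma mult_xmat: "M \<in> carrier_mat n n \<Longrightarrow> 0 < j \<Longrightarrow> j < n \<Longrightarrow> M * xmat n j b = addcol b j (j - 1) M"
  by (simp add: xmat_eq_addrow_mat addcol_mat)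

section \<open>Partial products of the factors of \<open>\<Phi>\<close>\<close>

definition Wargs :: "(nat \<Rightarrow> nat \<Rightarrow> complex) \<Rightarrow> nat \<Rightarrow> nat \<Rightarrow> complex" where
  "Wargs z m k = (if k = m then z m m else z m k / z m (k - 1))"

fun Wprod :: "nat \<Rightarrow> (nat \<Rightarrow> nat \<Rightarrow> complex) \<Rightarrow> nat \<Rightarrow> nat \<Rightarrow> complex mat" where
  "Wprod n z a 0 = 1\<^sub>m n"
| "Wprod n z a (Suc b) =
     (if a \<le> Suc b then Wmat n (Suc b) (Wargs z (Suc b)) * Wprod n z a b else 1\<^sub>m n)"

text \<open>Diagonal entry of the factor \<open>W\<^sup>m\<close> of \<open>\<Phi>(z)\<close> at the 0-based position \<open>k\<close>.\<close>
definition Wdiag :: "(nat \<Rightarrow> nat \<Rightarrow> complex) \<Rightarrow> nat \<Rightarrow> nat \<Rightarrow> complex" where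
  "Wdiag z m k = (if Suc k < m then 1 else Wargs z m (Suc k))"

lemma Wprod_carrier [simp]: "Wprod n z a b \<in> carrier_mat n n"
proof (induction b)
  case (Suc b)
  then show ?case using mult_carrier_mat[OF Wmat_carrier Suc.IH] by simp
qed simp

lemma Phi_eq_Wprod: "Phi n z = Wprod n z 1 n"
proof -
  have "Phi_aux n z m = Wprod n z 1 m" for m
    by (induction m) (simp_all add: Wargs_def[abs_def])
  then show ?thesis by (simp add: Phi_def)
qed

lemma Phi_carrier [simp]: "Phi n z \<in> carrier_mat n n"
  by (simp add: Phi_eq_Wprod)

lemma Wprod_empty: "b < a \<Longrightarrow> Wprod n z a b = 1\<^sub>m n"
  by (induction b) auto

lemma Wprod_split_first:
  "1 \<le> a \<Longrightarrow> a \<le> b \<Longrightarrow> Wprod n z a b = Wprod n z (Suc a) b * Wmat n a (Wargs z a)"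
proof (induction b)
  case (Suc b)
  show ?case
  proof (cases "a = Suc b")
    case True
    then show ?thesis
      by (simp add: Wprod_empty left_mult_one_mat[OF Wmat_carrier]
          right_mult_one_mat[OF Wmat_carrier])
  next
    case False
    then have ab: "a \<le> b" using Suc.prems by simp
    have "Wprod n z a (Suc b)
        = Wmat n (Suc b) (Wargs z (Suc b)) * (Wprod n z (Suc a) b * Wmat n a (Wargs z a))"
      using Suc ab by simp
    also have "\<dots> = (Wmat n (Suc b) (Wargs z (Suc b)) * Wprod n z (Suc a) b) * Wmat n a (Wargs z a)"
      by (rule assoc_mult_mat[symmetric, of _ n n _ n _ n]) auto
    also have "\<dots> = Wprod n z (Suc a) (Suc b) * Wmat n a (Wargs z a)"
      using ab by simp
    finally show ?thesis .
  qed
qed simp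

lemma Wprod_upper_zero: "r < c \<Longrightarrow> c < n \<Longrightarrow> Wprod n z a b $$ (r, c) = 0"
  by (induction b arbitrary: r) (auto simp: index_Wmat_mult)

lemma Wprod_unit_col:
  "Suc c < a \<Longrightarrow> r < n \<Longrightarrow> c < n \<Longrightarrow> Wprod n z a b $$ (r, c) = (if r = c then 1 else 0)"
  by (induction b arbitrary: r) (auto simp: index_Wmat_mult)

lemma Wprod_diag: "1 \<le> a \<Longrightarrow> k < n \<Longrightarrow> Wprod n z a b $$ (k, k) = (\<Prod>m\<in>{a..b}. Wdiag z m k)"
  by (induction b) (auto simp: index_Wmat_mult Wprod_upper_zero Wdiag_def prod.cl_ivl_Suc)

text \<open>Exactly one factor \<open>W\<^sup>m\<close> contributes its subdiagonal entry; the factors to its left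
  act on row \<open>k + 1\<close>, those to its right on row \<open>k\<close>, through their diagonal entries.\<close>
lemma Wprod_subdiag:
  assumes "1 \<le> a" "Suc k < n"
  shows "Wprod n z a b $$ (Suc k, k) = (\<Sum>m\<in>{a..b}. if m \<le> Suc k
     then (\<Prod>m'\<in>{Suc m..b}. Wdiag z m' (Suc k)) * (\<Prod>m'\<in>{a..<m}. Wdiag z m' k) else 0)"
  using assms
proof (induction b)
  case (Suc b)
  show ?case
  proof (cases "a \<le> Suc b")
    case True
    have "Wprod n z a (Suc b) $$ (Suc k, k) = Wdiag z (Suc b) (Suc k) * Wprod n z a b $$ (Suc k, k)
       + (if Suc b \<le> Suc k then Wprod n z a b $$ (k, k) else 0)"
      using True Suc.prems by (simp add: index_Wmat_mult Wdiag_def)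
    also have "Wprod n z a b $$ (k, k) = (\<Prod>m'\<in>{a..<Suc b}. Wdiag z m' k)"
      using Suc.prems by (simp add: Wprod_diag atLeastLessThanSuc_atLeastAtMost)
    also have "Wdiag z (Suc b) (Suc k) * Wprod n z a b $$ (Suc k, k) = (\<Sum>m\<in>{a..b}. if m \<le> Suc k
        then (\<Prod>m'\<in>{Suc m..Suc b}. Wdiag z m' (Suc k)) * (\<Prod>m'\<in>{a..<m}. Wdiag z m' k) else 0)"
      unfolding Suc.IH[OF Suc.prems] sum_distrib_left
      by (rule sum.cong) (auto simp: prod.cl_ivl_Suc)
    finally show ?thesis
      using True by (simp add: sum.cl_ivl_Suc add.commute)
  qed (use Suc.prems in simp)
qed simp

lemma GT_nonzero: "z \<in> GT n \<Longrightarrow> 1 \<le> i \<Longrightarrow> i \<le> j \<Longrightarrow> j \<le> n \<Longrightarrow> z i j \<noteq> 0"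
  unfolding GT_def by auto

definition zprod :: "(nat \<Rightarrow> nat \<Rightarrow> complex) \<Rightarrow> nat \<Rightarrow> nat \<Rightarrow> nat \<Rightarrow> complex" where
  "zprod z a b k = (\<Prod>m\<in>{a..<b}. z m k)"

lemma zprod_nonzero: "z \<in> GT n \<Longrightarrow> 1 \<le> a \<Longrightarrow> b \<le> Suc k \<Longrightarrow> k \<le> n \<Longrightarrow> zprod z a b k \<noteq> 0"
  unfolding zprod_def GT_def by (auto simp: prod_zero_iff)

lemma zprod_split: "a \<le> b \<Longrightarrow> b \<le> c \<Longrightarrow> zprod z a b k * zprod z b c k = zprod z a c k"
  unfolding zprod_def by (rule prod.atLeastLessThan_concat)

lemma zprod_empty [simp]: "zprod z a a k = 1"
  unfolding zprod_def by simp

lemma zprod_first: "a < b \<Longrightarrow> zprod z a b k = z a k * zprod z (Suc a) b k"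
  unfolding zprod_def by (simp add: prod.atLeast_Suc_lessThan)

lemma zprod_last: "a \<le> b \<Longrightarrow> zprod z a (Suc b) k = zprod z a b k * z b k"
  unfolding zprod_def by (simp add: prod.atLeastLessThan_Suc)

lemma prod_Wargs: "i \<le> k \<Longrightarrow> (\<Prod>m\<in>{i..k}. Wargs z m k) = zprod z i (Suc k) k / zprod z i k (k - 1)"
proof -
  assume ik: "i \<le> k"
  have "{i..k} = insert k {i..<k}" using ik by auto
  then have "(\<Prod>m\<in>{i..k}. Wargs z m k) = z k k * (\<Prod>m\<in>{i..<k}. z m k / z m (k - 1))"
    by (simp add: Wargs_def)
  also have "\<dots> = zprod z i (Suc k) k / zprod z i k (k - 1)"
    using ik by (simp add: prod_dividef zprod_def prod.atLeastLessThan_Suc mult.commute)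
  finally show ?thesis .
qed

lemma Wprod_diag_eq:
  assumes "1 \<le> i" "i \<le> k" "k \<le> n"
  shows "Wprod n z i n $$ (k - 1, k - 1) = zprod z i (Suc k) k / zprod z i k (k - 1)"
proof -
  have "Wprod n z i n $$ (k - 1, k - 1) = (\<Prod>m\<in>{i..n}. Wdiag z m (k - 1))"
    using assms by (intro Wprod_diag) auto
  also have "\<dots> = (\<Prod>m\<in>{i..k}. Wdiag z m (k - 1))"
    by (rule prod.mono_neutral_right) (use assms in \<open>auto simp: Wdiag_def\<close>)
  also have "\<dots> = (\<Prod>m\<in>{i..k}. Wargs z m k)"
    by (rule prod.cong) (use assms in \<open>auto simp: Wdiag_def\<close>)
  finally show ?thesis
    using prod_Wargs[OF assms(2)] by simp
qed

lemma prod_Wprod_diag: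
  assumes "z \<in> GT n" "1 \<le> i" "i + d \<le> Suc n"
  shows "(\<Prod>t<d. Wprod n z i n $$ (i - 1 + t, i - 1 + t)) = zprod z i (i + d) (i + d - 1)"
  using assms(3)
proof (induction d)
  case (Suc d)
  have "Wprod n z i n $$ (i - 1 + d, i - 1 + d)
      = zprod z i (Suc (i + d)) (i + d) / zprod z i (i + d) (i + d - 1)"
    using Wprod_diag_eq[of i "i + d" n z] assms Suc.prems by simp
  moreover have "zprod z i (i + d) (i + d - 1) \<noteq> 0"
    using assms Suc.prems by (intro zprod_nonzero) auto
  ultimately show ?case using Suc by simp
qed simp

lemma Wprod_subdiag_eq:
  assumes "1 \<le> a" "1 \<le> j" "j < n"
  shows "Wprod n z a n $$ (j, j - 1) = (\<Sum>m\<in>{a..j}.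
     zprod z (Suc m) (Suc (Suc j)) (Suc j) / zprod z (Suc m) (Suc j) j
     * (zprod z a m j / zprod z a m (j - 1)))"
proof -
  have j: "Suc (j - 1) = j"
    using assms by simp
  have "Wprod n z a n $$ (j, j - 1) = (\<Sum>m\<in>{a..n}. if m \<le> j then
      (\<Prod>m'\<in>{Suc m..n}. Wdiag z m' j) * (\<Prod>m'\<in>{a..<m}. Wdiag z m' (j - 1)) else 0)"
    using Wprod_subdiag[of a "j - 1" n z n] assms unfolding j by simp
  also have "\<dots> = (\<Sum>m\<in>{a..j}. (\<Prod>m'\<in>{Suc m..n}. Wdiag z m' j) * (\<Prod>m'\<in>{a..<m}. Wdiag z m' (j - 1)))"
    by (rule sum.mono_neutral_cong_right) (use assms in auto)
  also have "\<dots> = (\<Sum>m\<in>{a..j}. zprod z (Suc m) (Suc (Suc j)) (Suc j) / zprod z (Suc m) (Suc j) j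
       * (zprod z a m j / zprod z a m (j - 1)))"
  proof (rule sum.cong)
    fix m assume m: "m \<in> {a..j}"
    have "(\<Prod>m'\<in>{Suc m..n}. Wdiag z m' j) = (\<Prod>m'\<in>{Suc m..Suc j}. Wdiag z m' j)"
      by (rule prod.mono_neutral_right) (use assms m in \<open>auto simp: Wdiag_def\<close>)
    also have "\<dots> = (\<Prod>m'\<in>{Suc m..Suc j}. Wargs z m' (Suc j))"
      by (rule prod.cong) (use assms m in \<open>auto simp: Wdiag_def\<close>)
    finally have "(\<Prod>m'\<in>{Suc m..n}. Wdiag z m' j) = (\<Prod>m'\<in>{Suc m..Suc j}. Wargs z m' (Suc j))" .
    moreover have "(\<Prod>m'\<in>{a..<m}. Wdiag z m' (j - 1)) = (\<Prod>m'\<in>{a..<m}. z m' j / z m' (j - 1))"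
      by (rule prod.cong) (use assms m in \<open>auto simp: Wdiag_def Wargs_def\<close>)
    ultimately show "(\<Prod>m'\<in>{Suc m..n}. Wdiag z m' j) * (\<Prod>m'\<in>{a..<m}. Wdiag z m' (j - 1)) =
        zprod z (Suc m) (Suc (Suc j)) (Suc j) / zprod z (Suc m) (Suc j) j
        * (zprod z a m j / zprod z a m (j - 1))"
      using m prod_Wargs[of "Suc m" "Suc j" z] by (simp add: prod_dividef zprod_def)
  qed simp
  finally show ?thesis .
qed

section \<open>Diamond ratios\<close>

definition diamond_prod :: "(nat \<Rightarrow> nat \<Rightarrow> complex) \<Rightarrow> nat \<Rightarrow> nat \<Rightarrow> complex" where
  "diamond_prod z j m = (\<Prod>l\<in>{2..m}. diamond z l j)"

lemma diamond_prod_eq: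
  "1 \<le> m \<Longrightarrow> diamond_prod z j m =
     zprod z 1 m j * zprod z 2 (Suc m) j / (zprod z 1 m (j - 1) * zprod z 2 (Suc m) (Suc j))"
proof (induction m)
  case (Suc m)
  show ?case
  proof (cases "m = 0")
    case True
    then show ?thesis by (simp add: diamond_prod_def zprod_def)
  next
    case False
    then have "diamond_prod z j (Suc m) = diamond z (Suc m) j * diamond_prod z j m"
      by (simp add: diamond_prod_def prod.cl_ivl_Suc)
    with False show ?thesis
      using Suc.IH by (simp add: diamond_def zprod_last mult_ac)
  qed
qed simp

lemma diamond_prod_nonzero: "z \<in> GT n \<Longrightarrow> 1 \<le> m \<Longrightarrow> m \<le> j \<Longrightarrow> j < n \<Longrightarrow> diamond_prod z j m \<noteq> 0"
  by (simp add: diamond_prod_eq zprod_nonzero)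

definition subdiag_scale :: "(nat \<Rightarrow> nat \<Rightarrow> complex) \<Rightarrow> nat \<Rightarrow> nat \<Rightarrow> complex" where
  "subdiag_scale z j a =
     zprod z 2 (Suc (Suc j)) (Suc j) * zprod z 1 a (j - 1) / (zprod z 2 (Suc j) j * zprod z 1 a j)"

lemma zprod_ratio_eq_diamond_prod:
  assumes z: "z \<in> GT n" and "1 \<le> a" "a \<le> m" "m \<le> j" "j < n"
  shows "zprod z (Suc m) (Suc (Suc j)) (Suc j) / zprod z (Suc m) (Suc j) j
       * (zprod z a m j / zprod z a m (j - 1))
     = subdiag_scale z j a * diamond_prod z j m"
proof -
  have "zprod z 2 (Suc (Suc j)) (Suc j)
      = zprod z 2 (Suc m) (Suc j) * zprod z (Suc m) (Suc (Suc j)) (Suc j)"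
    "zprod z 2 (Suc j) j = zprod z 2 (Suc m) j * zprod z (Suc m) (Suc j) j"
    "zprod z 1 m j = zprod z 1 a j * zprod z a m j"
    "zprod z 1 m (j - 1) = zprod z 1 a (j - 1) * zprod z a m (j - 1)"
    by (rule zprod_split[symmetric]; use assms in auto)+
  moreover have "zprod z 2 (Suc m) (Suc j) \<noteq> 0" "zprod z 2 (Suc m) j \<noteq> 0" "zprod z 1 a j \<noteq> 0"
    "zprod z 1 a (j - 1) \<noteq> 0" "zprod z (Suc m) (Suc j) j \<noteq> 0" "zprod z a m (j - 1) \<noteq> 0"
    by (rule zprod_nonzero[OF z]; use assms in auto)+
  ultimately show ?thesis
    using assms by (simp add: subdiag_scale_def diamond_prod_eq field_simps)
qed

lemma Wprod_subdiag_diamond: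
  assumes z: "z \<in> GT n" and "1 \<le> a" "a \<le> j" "j < n"
  shows "Wprod n z a n $$ (j, j - 1) = subdiag_scale z j a * (\<Sum>m\<in>{a..j}. diamond_prod z j m)"
  unfolding Wprod_subdiag_eq[OF assms(2) order_trans[OF assms(2,3)] assms(4)] sum_distrib_left
  using assms by (intro sum.cong zprod_ratio_eq_diamond_prod) auto

lemma Cc_eq_diamond_sums:
  "1 \<le> i \<Longrightarrow> Cc c z i j = (\<Sum>k\<in>{1..j}. diamond_prod z j k) + (c - 1) * (\<Sum>k\<in>{i..j}. diamond_prod z j k)"
proof -
  assume i: "1 \<le> i"
  have "Cc c z i j
      = (\<Sum>k\<in>{1..j}. diamond_prod z j k + (if i \<le> k then (c - 1) * diamond_prod z j k else 0))"
    unfolding Cc_def diamond_prod_def by (rule sum.cong) (auto simp: algebra_simps)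
  also have "\<dots> = (\<Sum>k\<in>{1..j}. diamond_prod z j k)
      + (\<Sum>k\<in>{1..j}. if i \<le> k then (c - 1) * diamond_prod z j k else 0)"
    by (simp add: sum.distrib)
  also have "(\<Sum>k\<in>{1..j}. if i \<le> k then (c - 1) * diamond_prod z j k else 0)
      = (\<Sum>k\<in>{i..j}. (c - 1) * diamond_prod z j k)"
    using i by (intro sum.mono_neutral_cong_right) auto
  finally show ?thesis
    by (simp add: sum_distrib_left)
qed

lemma gMax_inverse_diamond_prods:
  "1 \<le> j \<Longrightarrow>
   gMax (\<lambda>k. \<Prod>i=2..k. inverse (diamond z i j)) {1..j} = inverse (\<Sum>k\<in>{1..j}. diamond_prod z j k)"
  unfolding gMax_def diamond_prod_def by (simp add: prod_inversef[unfolded comp_def])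

lemma gMax_diamond_prods:
  assumes z: "z \<in> GT n" and j: "1 \<le> j" "j < n"
  shows "gMax (\<lambda>k. \<Prod>i=k+1..j. diamond z i j) {1..j}
     = diamond_prod z j j / (\<Sum>k\<in>{1..j}. diamond_prod z j k)"
proof -
  have "(\<Prod>i=k+1..j. diamond z i j) = diamond_prod z j j / diamond_prod z j k"
    if k: "k \<in> {1..j}" for k
  proof -
    have "{2..j} = {2..k} \<union> {k+1..j}" "{2..k} \<inter> {k+1..j} = {}"
      using k by auto
    then have "diamond_prod z j j = diamond_prod z j k * (\<Prod>i=k+1..j. diamond z i j)"
      unfolding diamond_prod_def by (simp add: prod.union_disjoint)
    then show ?thesis
      using diamond_prod_nonzero[OF z, of k j] k j by simp
  qed
  then have "(\<Sum>k\<in>{1..j}. inverse (\<Prod>i=k+1..j. diamond z i j))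
      = (\<Sum>k\<in>{1..j}. diamond_prod z j k) / diamond_prod z j j"
    by (simp add: sum_divide_distrib)
  then show ?thesis
    unfolding gMax_def using j by simp
qed

section \<open>Minors\<close>

definition gen_minor :: "'a :: comm_ring_1 mat \<Rightarrow> (nat \<Rightarrow> nat) \<Rightarrow> nat \<Rightarrow> nat \<Rightarrow> 'a" where
  "gen_minor A \<rho> p s = det (mat s s (\<lambda>(a, b). A $$ (\<rho> a, p + b)))"

lemma minor_eq_gen_minor: "minor A i j = gen_minor A (\<lambda>a. i - 1 + a) 0 (Suc j - i)"
  by (simp add: minor_def gen_minor_def)

lemma det_lower_triangular_prod:
  assumes "A \<in> carrier_mat s s" "\<And>i j. i < j \<Longrightarrow> j < s \<Longrightarrow> A $$ (i, j) = 0"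
  shows "det A = (\<Prod>i<s. A $$ (i, i))"
  using det_lower_triangular[OF assms(2,1)] assms(1)
  by (simp add: diag_mat_def prod.list_conv_set_nth atLeast0LessThan)

lemma det_upper_unitriangular:
  assumes "T \<in> carrier_mat s s" "\<And>i j. j < i \<Longrightarrow> i < s \<Longrightarrow> T $$ (i, j) = 0"
    "\<And>i. i < s \<Longrightarrow> T $$ (i, i) = 1"
  shows "det T = 1"
proof -
  have "upper_triangular T"
    using assms unfolding upper_triangular_def by auto
  then show ?thesis
    using det_upper_triangular[OF _ assms(1)] assms
    by (simp add: diag_mat_def prod.list_conv_set_nth atLeast0LessThan)
qed

text \<open>The window of the product is the shifted window of \<open>B\<close> times an upper unitriangular
  matrix.\<close>
lemma gen_minor_mult_Wmat:
  assumes B: "B \<in> carrier_mat n n" and ps: "p + s < n"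
    and rows: "\<And>a. a < s \<Longrightarrow> \<rho> a < n \<and> B $$ (\<rho> a, p) = 0"
  shows "gen_minor (B * Wmat n (Suc p) y) \<rho> p s = gen_minor B \<rho> (Suc p) s"
proof -
  define T where
    "T = mat s s (\<lambda>(a, b). if a = b then 1 else if Suc a = b then y (Suc (p + b)) else (0::complex))"
  define S where "S = mat s s (\<lambda>(a, b). B $$ (\<rho> a, Suc p + b))"
  have TC: "T \<in> carrier_mat s s" and SC: "S \<in> carrier_mat s s"
    unfolding T_def S_def by auto
  have window: "mat s s (\<lambda>(a, b). (B * Wmat n (Suc p) y) $$ (\<rho> a, p + b)) = S * T"
  proof (rule eq_matI)
    fix a b assume "a < dim_row (S * T)" "b < dim_col (S * T)"
    then have a: "a < s" and b: "b < s"
      using SC TC by auto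
    have "(S * T) $$ (a, b) = (\<Sum>t<s. S $$ (a, t) * T $$ (t, b))"
      by (rule index_mult_mat_sum[OF SC TC a b])
    also have "\<dots> = (\<Sum>t<s. (if t = b then B $$ (\<rho> a, Suc p + b) else 0)
       + (if t = b - 1 then (if 0 < b then B $$ (\<rho> a, p + b) * y (Suc (p + b)) else 0) else 0))"
      by (rule sum.cong) (auto simp: S_def T_def a b)
    also have "\<dots> = (B * Wmat n (Suc p) y) $$ (\<rho> a, p + b)"
      using index_mult_Wmat[OF B, of "\<rho> a" "p + b" "Suc p" y] rows[OF a] a b ps
      by (simp add: sum.distrib less_imp_diff_less)
    finally show
      "mat s s (\<lambda>(a, b). (B * Wmat n (Suc p) y) $$ (\<rho> a, p + b)) $$ (a, b) = (S * T) $$ (a, b)"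
      using a b by simp
  qed (use SC TC in auto)
  have "det T = 1"
    by (rule det_upper_unitriangular[OF TC]) (auto simp: T_def)
  then show ?thesis
    unfolding gen_minor_def window det_mult[OF SC TC] by (simp add: S_def)
qed

lemma gen_minor_Wprod_shift:
  assumes "p + d + s \<le> n" "\<And>a. a < s \<Longrightarrow> \<rho> a < n \<and> p + d \<le> \<rho> a"
  shows "gen_minor (Wprod n z (Suc p) n) \<rho> p s = gen_minor (Wprod n z (Suc (p + d)) n) \<rho> (p + d) s"
  using assms
proof (induction d)
  case (Suc d)
  have "gen_minor (Wprod n z (Suc p) n) \<rho> p s = gen_minor (Wprod n z (Suc (p + d)) n) \<rho> (p + d) s"
    using Suc.prems by (intro Suc.IH) (auto dest: Suc_leD)
  also have "Wprod n z (Suc (p + d)) n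
      = Wprod n z (Suc (Suc (p + d))) n * Wmat n (Suc (p + d)) (Wargs z (Suc (p + d)))"
    using Suc.prems(1) by (intro Wprod_split_first) auto
  also have "gen_minor \<dots> \<rho> (p + d) s
      = gen_minor (Wprod n z (Suc (Suc (p + d))) n) \<rho> (Suc (p + d)) s"
  proof (rule gen_minor_mult_Wmat)
    fix a assume "a < s"
    then show "\<rho> a < n \<and> Wprod n z (Suc (Suc (p + d))) n $$ (\<rho> a, p + d) = 0"
      using Suc.prems(1) Suc.prems(2)[OF \<open>a < s\<close>] by (simp add: Wprod_unit_col)
  qed (use Suc.prems in auto)
  finally show ?case
    by simp
qed simp

lemma gen_minor_lower_triangular:
  assumes "Q \<in> carrier_mat n n" "\<And>r c. r < c \<Longrightarrow> c < n \<Longrightarrow> Q $$ (r, c) = 0"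
    and "\<And>a b. a < b \<Longrightarrow> b < s \<Longrightarrow> \<rho> a < p + b" and "p + s \<le> n"
  shows "gen_minor Q \<rho> p s = (\<Prod>a<s. Q $$ (\<rho> a, p + a))"
  unfolding gen_minor_def
  by (subst det_lower_triangular_prod[of _ s]) (use assms in auto)

lemma minor_Phi:
  assumes z: "z \<in> GT n" and "1 \<le> i" "i \<le> Suc r" "r \<le> n"
  shows "minor (Phi n z) i r = zprod z i (Suc r) r"
proof -
  have "minor (Phi n z) i r = gen_minor (Wprod n z (Suc 0) n) (\<lambda>a. i - 1 + a) 0 (Suc r - i)"
    by (simp add: minor_eq_gen_minor Phi_eq_Wprod)
  also have "\<dots>
      = gen_minor (Wprod n z (Suc (0 + (i - 1))) n) (\<lambda>a. i - 1 + a) (0 + (i - 1)) (Suc r - i)"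
    by (rule gen_minor_Wprod_shift) (use assms in auto)
  also have "\<dots> = (\<Prod>a<Suc r - i. Wprod n z i n $$ (i - 1 + a, i - 1 + a))"
    using assms by (subst gen_minor_lower_triangular[of _ n]) (auto intro: Wprod_upper_zero)
  also have "\<dots> = zprod z i (Suc r) r"
    using prod_Wprod_diag[OF z, of i "Suc r - i"] assms by simp
  finally show ?thesis .
qed

lemma gen_minor_Phi_last_row_below:
  assumes z: "z \<in> GT n" and "1 \<le> i" "i \<le> j" "j < n"
  shows "gen_minor (Phi n z) (\<lambda>a. if a < j - i then i - 1 + a else j) 0 (Suc j - i)
     = zprod z i j (j - 1) * subdiag_scale z j i * (\<Sum>m\<in>{i..j}. diamond_prod z j m)"
proof -
  let ?\<rho> = "\<lambda>a. if a < j - i then i - 1 + a else j"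
  have "gen_minor (Phi n z) ?\<rho> 0 (Suc j - i) = gen_minor (Wprod n z (Suc 0) n) ?\<rho> 0 (Suc j - i)"
    by (simp add: Phi_eq_Wprod)
  also have "\<dots> = gen_minor (Wprod n z (Suc (0 + (i - 1))) n) ?\<rho> (0 + (i - 1)) (Suc j - i)"
    by (rule gen_minor_Wprod_shift) (use assms in auto)
  also have "\<dots> = (\<Prod>a<Suc (j - i). Wprod n z i n $$ (?\<rho> a, i - 1 + a))"
    using assms
    by (subst gen_minor_lower_triangular[of _ n]) (auto intro: Wprod_upper_zero simp: Suc_diff_le)
  also have "\<dots> = (\<Prod>a<j - i. Wprod n z i n $$ (i - 1 + a, i - 1 + a)) * Wprod n z i n $$ (j, j - 1)"
    using assms by (simp add: lessThan_Suc mult.commute)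
  also have "(\<Prod>a<j - i. Wprod n z i n $$ (i - 1 + a, i - 1 + a)) = zprod z i j (j - 1)"
    using prod_Wprod_diag[OF z, of i "j - i"] assms by simp
  also have "Wprod n z i n $$ (j, j - 1) = subdiag_scale z j i * (\<Sum>m\<in>{i..j}. diamond_prod z j m)"
    using assms by (intro Wprod_subdiag_diamond) auto
  finally show ?thesis
    by (simp add: mult.assoc)
qed

lemma minor_mult_xmat:
  assumes "M \<in> carrier_mat n n" "0 < j" "j < n" "1 \<le> i" "r \<le> n"
  shows "minor (M * xmat n j b) i r = minor M i r"
proof (cases "j < Suc r - i")
  case True
  then have "mat (Suc r - i) (Suc r - i) (\<lambda>(t, c). (M * xmat n j b) $$ (i - 1 + t, c))
      = addcol b j (j - 1) (mat (Suc r - i) (Suc r - i) (\<lambda>(t, c). M $$ (i - 1 + t, c)))"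
    using assms by (auto simp: mult_xmat intro!: eq_matI)
  then show ?thesis
    unfolding minor_def using assms True by (simp add: det_addcol[where n = "Suc r - i"])
next
  case False
  then have "mat (Suc r - i) (Suc r - i) (\<lambda>(t, c). (M * xmat n j b) $$ (i - 1 + t, c))
      = mat (Suc r - i) (Suc r - i) (\<lambda>(t, c). M $$ (i - 1 + t, c))"
    using assms by (auto simp: mult_xmat intro!: eq_matI)
  then show ?thesis
    unfolding minor_def by simp
qed

lemma minor_xmat_mult:
  assumes "A \<in> carrier_mat n n" "0 < j" "j < n" "1 \<le> i" "r \<le> n" "r \<noteq> j"
  shows "minor (xmat n j a * A) i r = minor A i r"
proof (cases "i \<le> j \<and> j < r")
  case True
  define S where "S = mat (Suc r - i) (Suc r - i) (\<lambda>(t, c). A $$ (i - 1 + t, c))"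
  have "mat (Suc r - i) (Suc r - i) (\<lambda>(t, c). (xmat n j a * A) $$ (i - 1 + t, c))
      = addrow a (j - i) (Suc j - i) S"
    unfolding S_def using assms True by (auto simp: xmat_mult intro!: eq_matI)
  moreover have "det (addrow a (j - i) (Suc j - i) S) = det S"
    by (rule det_addrow[where n = "Suc r - i"]) (use True in \<open>auto simp: S_def\<close>)
  ultimately show ?thesis
    unfolding minor_def S_def by simp
next
  case False
  then have "mat (Suc r - i) (Suc r - i) (\<lambda>(t, c). (xmat n j a * A) $$ (i - 1 + t, c))
      = mat (Suc r - i) (Suc r - i) (\<lambda>(t, c). A $$ (i - 1 + t, c))"
    using assms by (auto simp: xmat_mult intro!: eq_matI)
  then show ?thesis
    unfolding minor_def by simp
qed

lemma det_last_row_add: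
  assumes C: "S0 \<in> carrier_mat (Suc m) (Suc m)" "S1 \<in> carrier_mat (Suc m) (Suc m)"
      "S2 \<in> carrier_mat (Suc m) (Suc m)"
    and same: "\<And>i c. i < m \<Longrightarrow> c < Suc m \<Longrightarrow> S1 $$ (i, c) = S0 $$ (i, c) \<and> S2 $$ (i, c) = S0 $$ (i, c)"
    and last: "\<And>c. c < Suc m \<Longrightarrow> S1 $$ (m, c) = S0 $$ (m, c) + a * S2 $$ (m, c)"
  shows "det S1 = det S0 + a * det S2"
proof -
  have "mat_delete S1 m c = mat_delete S0 m c" "mat_delete S2 m c = mat_delete S0 m c" for c
    using C same unfolding mat_delete_def by (auto intro!: eq_matI)
  then have cof: "cofactor S1 m c = cofactor S0 m c" "cofactor S2 m c = cofactor S0 m c" for c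
    unfolding cofactor_def by auto
  have "det S1 = (\<Sum>c<Suc m. S1 $$ (m, c) * cofactor S1 m c)"
    by (rule laplace_expansion_row[OF C(2)]) simp
  also have "\<dots> = (\<Sum>c<Suc m. S0 $$ (m, c) * cofactor S0 m c)
      + a * (\<Sum>c<Suc m. S2 $$ (m, c) * cofactor S2 m c)"
    by (simp add: last cof sum.distrib sum_distrib_left algebra_simps)
  also have "\<dots> = det S0 + a * det S2"
    using laplace_expansion_row[OF C(1), of m] laplace_expansion_row[OF C(3), of m] by simp
  finally show ?thesis .
qed

lemma minor_xmat_mult_last:
  assumes "A \<in> carrier_mat n n" "1 \<le> i" "i \<le> j" "j < n"
  shows "minor (xmat n j a * A) i j
     = minor A i j + a * gen_minor A (\<lambda>t. if t < j - i then i - 1 + t else j) 0 (Suc j - i)"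
proof -
  have s: "Suc j - i = Suc (j - i)"
    using assms by auto
  show ?thesis
    unfolding minor_def gen_minor_def s
    by (rule det_last_row_add) (use assms in \<open>auto simp: xmat_mult\<close>)
qed

section \<open>The geometric crystal structure\<close>

lemma Phi_diag_eq:
  assumes "1 \<le> k" "k \<le> n"
  shows "Ent (Phi n z) k k = zprod z 1 (Suc k) k / zprod z 1 k (k - 1)"
  unfolding Ent_def Phi_eq_Wprod using assms by (intro Wprod_diag_eq) auto

lemma Phi_subdiag_eq:
  assumes "z \<in> GT n" "1 \<le> j" "j < n"
  shows "Ent (Phi n z) (Suc j) j = subdiag_scale z j 1 * (\<Sum>k\<in>{1..j}. diamond_prod z j k)"
  unfolding Ent_def Phi_eq_Wprod
  using Wprod_subdiag_diamond[OF assms(1) order_refl assms(2,3)] by simp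

lemma gammabar_eq:
  assumes "1 \<le> k" "k \<le> n"
  shows "gammabar n z k = (\<Prod>i=1..k. z i k) / (\<Prod>i=1..k-1. z i (k - 1))"
proof -
  have "zprod z 1 (Suc k) k = (\<Prod>i=1..k. z i k)"
    by (simp add: zprod_def atLeastLessThanSuc_atLeastAtMost)
  moreover have "zprod z 1 k (k - 1) = (\<Prod>i=1..k-1. z i (k - 1))"
    unfolding zprod_def using assms by (intro prod.cong) auto
  ultimately show ?thesis
    unfolding gammabar_def Phi_diag_eq[OF assms] by simp
qed

lemma epsbar_eq:
  assumes z: "z \<in> GT n" and j: "1 \<le> j" "j < n" and E: "Ent (Phi n z) (Suc j) j \<noteq> 0"
  shows "epsbar n z j = z 1 (Suc j) / z 1 j * gMax (\<lambda>k. \<Prod>i=2..k. inverse (diamond z i j)) {1..j}"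
proof -
  define C where "C = (\<Sum>k\<in>{1..j}. diamond_prod z j k)"
  have "C \<noteq> 0"
    using E Phi_subdiag_eq[OF z j] by (simp add: C_def)
  moreover have
    "Ent (Phi n z) (Suc j) (Suc j) = zprod z 1 (Suc (Suc j)) (Suc j) / zprod z 1 (Suc j) j"
    using Phi_diag_eq[of "Suc j" n z] j by simp
  moreover have "zprod z 1 (Suc (Suc j)) (Suc j) = z 1 (Suc j) * zprod z 2 (Suc (Suc j)) (Suc j)"
    "zprod z 1 (Suc j) j = z 1 j * zprod z 2 (Suc j) j"
    using j by (simp_all add: zprod_first numeral_2_eq_2)
  moreover have "zprod z 2 (Suc (Suc j)) (Suc j) \<noteq> 0" "zprod z 2 (Suc j) j \<noteq> 0" "z 1 j \<noteq> 0"
    using z j by (simp_all add: zprod_nonzero GT_nonzero)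
  ultimately show ?thesis
    unfolding epsbar_def Phi_subdiag_eq[OF z j]
      gMax_inverse_diamond_prods[OF j(1)] C_def[symmetric]
    using j by (simp add: subdiag_scale_def field_simps)
qed

lemma phibar_eq_diamond_sum:
  assumes z: "z \<in> GT n" and j: "1 \<le> j" "j < n"
  shows "phibar n z j = zprod z 1 (Suc j) j / zprod z 1 j (j - 1)
     / (subdiag_scale z j 1 * (\<Sum>k\<in>{1..j}. diamond_prod z j k))"
  unfolding phibar_def Phi_diag_eq[OF j(1) less_imp_le[OF j(2)]] Phi_subdiag_eq[OF z j] by simp

lemma phibar_eq:
  assumes z: "z \<in> GT n" and j: "1 \<le> j" "j < n" and E: "Ent (Phi n z) (Suc j) j \<noteq> 0"
  shows "phibar n z j = z j j / z (Suc j) (Suc j) * gMax (\<lambda>k. \<Prod>i=k+1..j. diamond z i j) {1..j}"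
proof -
  define C where "C = (\<Sum>k\<in>{1..j}. diamond_prod z j k)"
  have "C \<noteq> 0"
    using E Phi_subdiag_eq[OF z j] by (simp add: C_def)
  moreover have "zprod z 1 (Suc j) j = zprod z 1 j j * z j j"
    "zprod z 2 (Suc (Suc j)) (Suc j) = zprod z 2 (Suc j) (Suc j) * z (Suc j) (Suc j)"
    using j by (simp_all add: zprod_last)
  moreover have "zprod z 2 (Suc j) (Suc j) \<noteq> 0" "zprod z 2 (Suc j) j \<noteq> 0" "zprod z 1 j (j - 1) \<noteq> 0"
    "zprod z 1 j j \<noteq> 0" "z (Suc j) (Suc j) \<noteq> 0"
    using z j by (simp_all add: zprod_nonzero GT_nonzero)
  ultimately show ?thesis
    unfolding phibar_eq_diamond_sum[OF z j] gMax_diamond_prods[OF z j] C_def[symmetric]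
      diamond_prod_eq[OF j(1)]
    by (simp add: subdiag_scale_def field_simps)
qed

lemma minor_emat:
  assumes "1 \<le> j" "j < n" "1 \<le> i" "r \<le> n"
  shows "minor (emat n c j z) i r = minor (xmat n j ((c - 1) * phibar n z j) * Phi n z) i r"
  unfolding emat_def using assms mult_carrier_mat[OF xmat_carrier Phi_carrier]
  by (intro minor_mult_xmat) auto

lemma minor_emat_off_j:
  assumes "z \<in> GT n" "1 \<le> j" "j < n" "1 \<le> i" "i \<le> Suc r" "r \<le> n" "r \<noteq> j"
  shows "minor (emat n c j z) i r = zprod z i (Suc r) r"
  using assms by (simp add: minor_emat minor_xmat_mult minor_Phi)

lemma minor_emat_at_j:
  assumes z: "z \<in> GT n" and j: "1 \<le> j" "j < n" and nz: "(\<Sum>k\<in>{1..j}. diamond_prod z j k) \<noteq> 0"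
    and i: "1 \<le> i" "i \<le> Suc j"
  shows "minor (emat n c j z) i j
     = zprod z i (Suc j) j * Cc c z i j / (\<Sum>k\<in>{1..j}. diamond_prod z j k)"
proof (cases "i = Suc j")
  case True
  then show ?thesis
    using nz by (simp add: minor_def Cc_eq_diamond_sums)
next
  case False
  define C where "C = (\<Sum>k\<in>{1..j}. diamond_prod z j k)"
  define S where "S = (\<Sum>k\<in>{i..j}. diamond_prod z j k)"
  have "C \<noteq> 0"
    using nz by (simp add: C_def)
  have "minor (emat n c j z) i j
      = zprod z i (Suc j) j
        + (c - 1) * phibar n z j * (zprod z i j (j - 1) * subdiag_scale z j i * S)"
    using assms False
    by (simp add: minor_emat minor_xmat_mult_last minor_Phi gen_minor_Phi_last_row_below S_def)
  also have "\<dots> = zprod z i (Suc j) j * Cc c z i j / C"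
  proof -
    have "zprod z 1 j (j - 1) = zprod z 1 i (j - 1) * zprod z i j (j - 1)"
      "zprod z 1 (Suc j) j = zprod z 1 i j * zprod z i (Suc j) j"
      using i False by (simp_all add: zprod_split)
    moreover have "zprod z 1 i (j - 1) \<noteq> 0" "zprod z i j (j - 1) \<noteq> 0" "zprod z 1 i j \<noteq> 0"
      "zprod z 2 (Suc (Suc j)) (Suc j) \<noteq> 0" "zprod z 2 (Suc j) j \<noteq> 0"
      using z i j False by (simp_all add: zprod_nonzero)
    ultimately show ?thesis
      unfolding phibar_eq_diamond_sum[OF z j] Cc_eq_diamond_sums[OF i(1)]
        C_def[symmetric] S_def[symmetric]
      using \<open>C \<noteq> 0\<close> by (simp add: subdiag_scale_def field_simps)
  qed
  finally show ?thesis
    by (simp add: C_def)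
qed

lemma ebar_eq:
  assumes z: "z \<in> GT n" and j: "1 \<le> j" "j < n" and E: "Ent (Phi n z) (Suc j) j \<noteq> 0"
    and i: "1 \<le> i" "i \<le> r" "r \<le> n"
  shows "ebar n c j z i r = (if r = j then z i j * Cc c z i j / Cc c z (Suc i) j else z i r)"
proof -
  have "zprod z i (Suc r) r = z i r * zprod z (Suc i) (Suc r) r" "zprod z (Suc i) (Suc r) r \<noteq> 0"
    using z i by (simp_all add: zprod_first zprod_nonzero)
  moreover have "(\<Sum>k\<in>{1..j}. diamond_prod z j k) \<noteq> 0"
    using E Phi_subdiag_eq[OF z j] by simp
  ultimately show ?thesis
    unfolding ebar_def Psi_def using assms
    by (cases "Cc c z (Suc i) j = 0") (auto simp: minor_emat_at_j minor_emat_off_j)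
qed

theorem lemma3p10:
  fixes n :: nat and z :: "nat \<Rightarrow> nat \<Rightarrow> complex"
  assumes "z \<in> GT n"
  shows "(\<forall>k\<in>{1..n}. gammabar n z k = (\<Prod>i=1..k. z i k) / (\<Prod>i=1..k-1. z i (k - 1)))
    \<and> (\<forall>j\<in>{1..n-1}. Ent (Phi n z) (Suc j) j \<noteq> 0 \<longrightarrow>
         epsbar n z j = z 1 (Suc j) / z 1 j * gMax (\<lambda>k. \<Prod>i=2..k. inverse (diamond z i j)) {1..j}
       \<and> phibar n z j = z j j / z (Suc j) (Suc j) * gMax (\<lambda>k. \<Prod>i=k+1..j. diamond z i j) {1..j}
       \<and> (\<forall>c. c \<noteq> 0 \<longrightarrow>
            (\<forall>i r. 1 \<le> i \<and> i \<le> r \<and> r \<le> n \<longrightarrow> minor (emat n c j z) i r \<noteq> 0) \<longrightarrow>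
            (\<forall>i r. 1 \<le> i \<and> i \<le> r \<and> r \<le> n \<longrightarrow>
               ebar n c j z i r = (if r = j then z i j * Cc c z i j / Cc c z (Suc i) j else z i r))))"
  using assms by (auto simp: gammabar_eq epsbar_eq phibar_eq ebar_eq)

end
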